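(* Let $\mathcal{Y}$ and $\mathcal{O}$ be finite sets, $\varphi\colon\mathcal{Y}\to\mathbb{R}^p$, $\psi\colon\mathcal{O}\to\mathbb{R}^p$, and let $L\colon\mathcal{O}\times\mathcal{Y}\to\mathbb{R}_+$ satisfy $L(\hat y,y)=\langle\psi(\hat y),V\varphi(y)+b\rangle+c(y)$ with $V\in\mathbb{R}^{p\times p}$, $b\in\mathbb{R}^p$, $c\colon\mathcal{Y}\to\mathbb{R}$. Let $\Omega\colon\mathbb{R}^p\to\mathbb{R}\cup\{\infty\}$ be proper, convex and lower semicontinuous with $\varphi(\mathcal{Y})\subseteq\operatorname{dom}(\Omega)$, and let the surrogate be $S(\theta,y)=S_\Omega(\theta,\varphi(y))$. Then for any decoder $d\colon\mathbb{R}^p\to\mathcal{O}$ and any $\epsilon\ge0$, the calibration function $$\zeta(\epsilon)=\inf_{\theta\in\mathbb{R}^p,\ q\in\triangle^{|\mathcal{Y}|}}\delta s(\theta,q)\quad\text{s.t.}\quad\delta\ell(d(\theta),q)\ge\epsilon$$ equals $$\zeta(\epsilon)=\inf_{\theta\in\mathbb{R}^p,\ \mu\in\mathcal{M}}S_\Omega(\theta,\mu)\quad\text{s.t.}\quad\langle\psi(d(\theta))-\psi(\hat y_L(\mu)),V\mu+b\rangle\ge\epsilon.$$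
   Context: $\triangle^{n}=\{q\in\mathbb{R}^n_+:\|q\|_1=1\}$. $S_\Omega(\theta,\mu)=\Omega^*(\theta)+\Omega(\mu)-\langle\theta,\mu\rangle$ where $\Omega^*$ is the Fenchel conjugate. $\mathcal{M}=\operatorname{conv}(\varphi(\mathcal{Y}))$, and for $q\in\triangle^{|\mathcal{Y}|}$, $\mu_\varphi(q)=\mathbb{E}_{Y\sim q}[\varphi(Y)]$. Pointwise risks: $\ell(\hat y,q)=\mathbb{E}_{Y\sim q}L(\hat y,Y)$, $s(\theta,q)=\mathbb{E}_{Y\sim q}S(\theta,Y)$; excess pointwise risks $\delta\ell(\hat y,q)=\ell(\hat y,q)-\min_{y'\in\mathcal{O}}\ell(y',q)$ and $\delta s(\theta,q)=s(\theta,q)-\inf_{\theta'\in\mathbb{R}^p}s(\theta',q)$. Calibrated decoding: $\hat y_L(u)\in\operatorname{argmin}_{y'\in\mathcal{O}}\langle\psi(y'),Vu+b\rangle$ (any fixed tie-breaking). *)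

theory Defs
  imports "HOL-Analysis.Analysis"
begin

definition proper_fun :: "('a::real_vector \<Rightarrow> ereal) \<Rightarrow> bool" where
  "proper_fun \<Omega> \<longleftrightarrow> (\<forall>x. \<Omega> x \<noteq> -\<infinity>) \<and> (\<exists>x. \<Omega> x \<noteq> \<infinity>)"

definition convex_ext :: "('a::real_vector \<Rightarrow> ereal) \<Rightarrow> bool" where
  "convex_ext \<Omega> \<longleftrightarrow> (\<forall>x y (t::real). 0 < t \<and> t < 1 \<longrightarrow>
      \<Omega> (t *\<^sub>R x + (1 - t) *\<^sub>R y) \<le> ereal t * \<Omega> x + ereal (1 - t) * \<Omega> y)"

definition lsc_fun :: "('a::topological_space \<Rightarrow> ereal) \<Rightarrow> bool" where
  "lsc_fun \<Omega> \<longleftrightarrow> (\<forall>x. \<Omega> x \<le> Liminf (at x) \<Omega>)"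

definition edom :: "('a \<Rightarrow> ereal) \<Rightarrow> 'a set" where
  "edom \<Omega> = {x. \<Omega> x < \<infinity>}"

definition fenchel_conj :: "('a::real_inner \<Rightarrow> ereal) \<Rightarrow> 'a \<Rightarrow> ereal" where
  "fenchel_conj \<Omega> \<theta> = (SUP \<mu>. ereal (\<theta> \<bullet> \<mu>) - \<Omega> \<mu>)"

definition fy_loss :: "('a::real_inner \<Rightarrow> ereal) \<Rightarrow> 'a \<Rightarrow> 'a \<Rightarrow> ereal" where
  "fy_loss \<Omega> \<theta> \<mu> = fenchel_conj \<Omega> \<theta> + \<Omega> \<mu> - ereal (\<theta> \<bullet> \<mu>)"

definition prob_simplex :: "'y set \<Rightarrow> ('y \<Rightarrow> real) set" where
  "prob_simplex Y = {q. (\<forall>y\<in>Y. 0 \<le> q y) \<and> (\<forall>y. y \<notin> Y \<longrightarrow> q y = 0) \<and> sum q Y = 1}"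

definition ptw_risk :: "'y set \<Rightarrow> ('o \<Rightarrow> 'y \<Rightarrow> real) \<Rightarrow> 'o \<Rightarrow> ('y \<Rightarrow> real) \<Rightarrow> real" where
  "ptw_risk Y L yh q = (\<Sum>y\<in>Y. q y * L yh y)"

definition excess_ptw_risk ::
  "'y set \<Rightarrow> 'o set \<Rightarrow> ('o \<Rightarrow> 'y \<Rightarrow> real) \<Rightarrow> 'o \<Rightarrow> ('y \<Rightarrow> real) \<Rightarrow> real" where
  "excess_ptw_risk Y Os L yh q = ptw_risk Y L yh q - (MIN y'\<in>Os. ptw_risk Y L y' q)"

definition surr_risk :: "'y set \<Rightarrow> ('t \<Rightarrow> 'y \<Rightarrow> ereal) \<Rightarrow> 't \<Rightarrow> ('y \<Rightarrow> real) \<Rightarrow> ereal" where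
  "surr_risk Y S \<theta> q = (\<Sum>y\<in>Y. ereal (q y) * S \<theta> y)"

definition excess_surr_risk :: "'y set \<Rightarrow> ('t \<Rightarrow> 'y \<Rightarrow> ereal) \<Rightarrow> 't \<Rightarrow> ('y \<Rightarrow> real) \<Rightarrow> ereal" where
  "excess_surr_risk Y S \<theta> q = surr_risk Y S \<theta> q - (INF \<theta>'. surr_risk Y S \<theta>' q)"

end

theory Submission
  imports Defs
begin

text \<open>The decisive observation is that both risks depend on the distribution \<open>q\<close> only through
its mean embedding \<open>\<mu> = \<Sum>\<^sub>y q y \<phi>(y)\<close>. Since \<open>L\<close> is affine in \<open>\<phi>(y)\<close>, the excess pointwise risk of
\<open>d \<theta>\<close> is \<open>\<langle>\<psi>(d \<theta>) - \<psi>(y\<^sub>L \<mu>), V\<mu> + b\<rangle>\<close>. The surrogate risk is \<open>S\<^sub>\<Omega>(\<theta>, \<mu>)\<close> plus a term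
independent of \<open>\<theta>\<close>, and by Fenchel--Moreau (\<open>\<Omega>\<close> proper, convex, lsc) \<open>inf\<^sub>\<theta> S\<^sub>\<Omega>(\<theta>, \<mu>) = 0\<close>,
so the excess surrogate risk is exactly \<open>S\<^sub>\<Omega>(\<theta>, \<mu>)\<close>. As \<open>q\<close> ranges over the simplex, \<open>\<mu>\<close>
ranges over the convex hull of \<open>\<phi>(Y)\<close>, so the two infima range over the same values.\<close>

definition expected_embedding :: "'y set \<Rightarrow> ('y \<Rightarrow> 'a::real_vector) \<Rightarrow> ('y \<Rightarrow> real) \<Rightarrow> 'a" where
  "expected_embedding Y \<phi> q = (\<Sum>y\<in>Y. q y *\<^sub>R \<phi> y)"

lemma prob_simplexD:
  assumes "q \<in> prob_simplex Y"
  shows "\<And>y. y \<in> Y \<Longrightarrow> 0 \<le> q y" and "sum q Y = 1"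
  using assms by (auto simp: prob_simplex_def)

lemma convex_hull_eq_expected_embedding_image:
  fixes \<phi> :: "'y \<Rightarrow> 'a::real_vector"
  assumes "finite Y"
  shows "convex hull (\<phi> ` Y) = expected_embedding Y \<phi> ` prob_simplex Y"
proof
  have "expected_embedding Y \<phi> q \<in> convex hull (\<phi> ` Y)" if "q \<in> prob_simplex Y" for q
    unfolding expected_embedding_def using prob_simplexD[OF that]
    by (intro convex_sum[OF assms convex_convex_hull]) (auto simp: hull_inc)
  then show "expected_embedding Y \<phi> ` prob_simplex Y \<subseteq> convex hull (\<phi> ` Y)" by blast
  show "convex hull (\<phi> ` Y) \<subseteq> expected_embedding Y \<phi> ` prob_simplex Y"
  proof (rule hull_minimal)
    show "\<phi> ` Y \<subseteq> expected_embedding Y \<phi> ` prob_simplex Y"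
    proof
      fix z assume "z \<in> \<phi> ` Y"
      then obtain y where y: "y \<in> Y" "z = \<phi> y" by auto
      let ?q = "\<lambda>x. if x = y then 1 else (0::real)"
      have "?q \<in> prob_simplex Y" using y assms by (auto simp: prob_simplex_def)
      moreover have "expected_embedding Y \<phi> ?q = z"
        using y assms by (simp add: expected_embedding_def if_distrib[of "\<lambda>t. t *\<^sub>R _"] sum.delta' cong: if_cong)
      ultimately show "z \<in> expected_embedding Y \<phi> ` prob_simplex Y" by force
    qed
    show "convex (expected_embedding Y \<phi> ` prob_simplex Y)"
    proof (rule convexI)
      fix x1 x2 and u v :: real
      assume "x1 \<in> expected_embedding Y \<phi> ` prob_simplex Y" "x2 \<in> expected_embedding Y \<phi> ` prob_simplex Y"
        and uv: "0 \<le> u" "0 \<le> v" "u + v = 1"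
      then obtain q1 q2 where q: "q1 \<in> prob_simplex Y" "q2 \<in> prob_simplex Y"
        and x: "x1 = expected_embedding Y \<phi> q1" "x2 = expected_embedding Y \<phi> q2" by blast
      let ?q = "\<lambda>y. u * q1 y + v * q2 y"
      have "sum ?q Y = u * sum q1 Y + v * sum q2 Y"
        by (simp add: sum.distrib sum_distrib_left)
      then have "?q \<in> prob_simplex Y" using q uv by (auto simp: prob_simplex_def)
      moreover have "expected_embedding Y \<phi> ?q = u *\<^sub>R x1 + v *\<^sub>R x2"
        unfolding x expected_embedding_def
        by (simp add: scaleR_add_left sum.distrib scaleR_sum_right)
      ultimately show "u *\<^sub>R x1 + v *\<^sub>R x2 \<in> expected_embedding Y \<phi> ` prob_simplex Y" by force
    qed
  qed
qed

lemma ptw_risk_affine_loss: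
  fixes \<phi> :: "'y \<Rightarrow> real^'p" and V :: "real^'p^'p"
  assumes q: "q \<in> prob_simplex Y"
    and L_form: "\<And>y. y \<in> Y \<Longrightarrow> L yh y = \<psi> yh \<bullet> (V *v \<phi> y + b) + c y"
  shows "ptw_risk Y L yh q = \<psi> yh \<bullet> (V *v expected_embedding Y \<phi> q + b) + (\<Sum>y\<in>Y. q y * c y)"
proof -
  have "ptw_risk Y L yh q = \<psi> yh \<bullet> (\<Sum>y\<in>Y. q y *\<^sub>R (V *v \<phi> y) + q y *\<^sub>R b) + (\<Sum>y\<in>Y. q y * c y)"
    unfolding ptw_risk_def
    by (simp add: L_form distrib_left sum.distrib inner_sum_right inner_add_right cong: sum.cong)
  also have "(\<Sum>y\<in>Y. q y *\<^sub>R (V *v \<phi> y) + q y *\<^sub>R b) = V *v expected_embedding Y \<phi> q + b"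
    using prob_simplexD(2)[OF q]
    by (simp add: expected_embedding_def sum.distrib linear_sum[OF matrix_vector_mul_linear]
        linear_scale[OF matrix_vector_mul_linear] flip: scaleR_sum_left)
  finally show ?thesis .
qed

lemma excess_ptw_risk_affine_loss:
  fixes \<phi> :: "'y \<Rightarrow> real^'p" and V :: "real^'p^'p" and b :: "real^'p"
    and Y :: "'y set" and q :: "'y \<Rightarrow> real"
  defines "u \<equiv> V *v expected_embedding Y \<phi> q + b"
  assumes "finite Os" and q: "q \<in> prob_simplex Y" and "yh \<in> Os"
    and L_form: "\<And>yh y. yh \<in> Os \<Longrightarrow> y \<in> Y \<Longrightarrow> L yh y = \<psi> yh \<bullet> (V *v \<phi> y + b) + c y"
    and ys_in: "ys \<in> Os" and ys_min: "\<And>y'. y' \<in> Os \<Longrightarrow> \<psi> ys \<bullet> u \<le> \<psi> y' \<bullet> u"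
  shows "excess_ptw_risk Y Os L yh q = (\<psi> yh - \<psi> ys) \<bullet> u"
proof -
  have risk: "ptw_risk Y L y' q = \<psi> y' \<bullet> u + (\<Sum>y\<in>Y. q y * c y)" if "y' \<in> Os" for y'
    unfolding u_def using q L_form[OF that] by (rule ptw_risk_affine_loss)
  have "(MIN y'\<in>Os. ptw_risk Y L y' q) = ptw_risk Y L ys q"
    using assms ys_min by (intro Min_eqI) (auto simp: risk)
  then show ?thesis
    unfolding excess_ptw_risk_def using assms by (simp add: risk inner_diff_left)
qed

lemma closed_epigraph_lsc:
  fixes \<Omega> :: "'a::topological_space \<Rightarrow> ereal"
  assumes lsc: "lsc_fun \<Omega>"
  shows "closed {z::'a \<times> real. \<Omega> (fst z) \<le> ereal (snd z)}"
proof -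
  have "open (- {z::'a \<times> real. \<Omega> (fst z) \<le> ereal (snd z)})"
  proof (rule open_prod_intro)
    fix z :: "'a \<times> real" assume "z \<in> - {z. \<Omega> (fst z) \<le> ereal (snd z)}"
    then obtain x t where z: "z = (x, t)" and lt: "ereal t < \<Omega> x" by (cases z) auto
    obtain c where c: "t < c" "ereal c < \<Omega> x" using ereal_dense2[OF lt] by auto
    have "eventually (\<lambda>y. ereal c < \<Omega> y) (at x)"
      using lsc c(2) le_Liminf_iff unfolding lsc_fun_def by blast
    then obtain S where S: "open S" "x \<in> S" "\<And>y. y \<in> S \<Longrightarrow> y \<noteq> x \<Longrightarrow> ereal c < \<Omega> y"
      unfolding eventually_at_topological by blast
    have "ereal s < \<Omega> y" if "y \<in> S" "s < c" for y s
    proof -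
      have "ereal c < \<Omega> y" using S(3)[of y] c(2) that(1) by (cases "y = x") auto
      then show ?thesis using that(2) less_ereal.simps(1) order.strict_trans by blast
    qed
    then have "S \<times> {..<c} \<subseteq> - {z. \<Omega> (fst z) \<le> ereal (snd z)}"
      by clarsimp (meson not_le)
    then show "\<exists>A B. open A \<and> open B \<and> z \<in> A \<times> B \<and> A \<times> B \<subseteq> - {z. \<Omega> (fst z) \<le> ereal (snd z)}"
      using S z c(1) by (intro exI[of _ S] exI[of _ "{..<c}"]) auto
  qed
  then show ?thesis by (simp add: closed_def)
qed

lemma convex_epigraph_ext:
  fixes \<Omega> :: "'a::real_vector \<Rightarrow> ereal"
  assumes cv: "convex_ext \<Omega>"
  shows "convex {z::'a \<times> real. \<Omega> (fst z) \<le> ereal (snd z)}"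
proof (rule convexI)
  fix z w :: "'a \<times> real" and u v :: real
  assume z: "z \<in> {z. \<Omega> (fst z) \<le> ereal (snd z)}" and w: "w \<in> {z. \<Omega> (fst z) \<le> ereal (snd z)}"
    and "0 \<le> u" "0 \<le> v" "u + v = 1"
  show "u *\<^sub>R z + v *\<^sub>R w \<in> {z. \<Omega> (fst z) \<le> ereal (snd z)}"
  proof (cases "u = 0 \<or> v = 0")
    case True then show ?thesis using z w \<open>u + v = 1\<close> by auto
  next
    case False
    then have u: "0 < u" "u < 1" and v: "v = 1 - u" using \<open>0 \<le> u\<close> \<open>0 \<le> v\<close> \<open>u + v = 1\<close> by auto
    have "\<Omega> (u *\<^sub>R fst z + (1 - u) *\<^sub>R fst w) \<le> ereal u * \<Omega> (fst z) + ereal (1 - u) * \<Omega> (fst w)"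
      using cv u unfolding convex_ext_def by blast
    also have "\<dots> \<le> ereal u * ereal (snd z) + ereal (1 - u) * ereal (snd w)"
      using z w u by (intro add_mono ereal_mult_left_mono) auto
    finally show ?thesis using v by simp
  qed
qed

lemma convex_edom:
  fixes \<Omega> :: "'a::real_vector \<Rightarrow> ereal"
  assumes cv: "convex_ext \<Omega>"
  shows "convex (edom \<Omega>)"
proof (rule convexI)
  fix x1 x2 and u v :: real
  assume x: "x1 \<in> edom \<Omega>" "x2 \<in> edom \<Omega>" and "0 \<le> u" "0 \<le> v" "u + v = 1"
  show "u *\<^sub>R x1 + v *\<^sub>R x2 \<in> edom \<Omega>"
  proof (cases "u = 0 \<or> v = 0")
    case True then show ?thesis using x \<open>u + v = 1\<close> by auto
  next
    case False
    then have u: "0 < u" "u < 1" and v: "v = 1 - u" using \<open>0 \<le> u\<close> \<open>0 \<le> v\<close> \<open>u + v = 1\<close> by auto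
    have "\<Omega> (u *\<^sub>R x1 + v *\<^sub>R x2) \<le> ereal u * \<Omega> x1 + ereal (1 - u) * \<Omega> x2"
      using cv u v unfolding convex_ext_def by blast
    also have "\<dots> < \<infinity>" using x u unfolding edom_def by (simp add: ereal_mult_less_right)
    finally show ?thesis unfolding edom_def by simp
  qed
qed

lemma edom_proper_finite:
  assumes "proper_fun \<Omega>" and "x \<in> edom \<Omega>"
  obtains m where "\<Omega> x = ereal m"
  using assms unfolding edom_def proper_fun_def by (cases "\<Omega> x") auto

lemma fenchel_young:
  "ereal (\<theta> \<bullet> x) - \<Omega> x \<le> fenchel_conj \<Omega> \<theta>"
  unfolding fenchel_conj_def by (rule SUP_upper) simp

lemma fenchel_conj_proper_neq_minf:
  assumes "proper_fun \<Omega>"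
  shows "fenchel_conj \<Omega> \<theta> \<noteq> -\<infinity>"
proof -
  obtain x where "\<Omega> x \<noteq> \<infinity>" "\<Omega> x \<noteq> -\<infinity>" using assms unfolding proper_fun_def by blast
  then have "ereal (\<theta> \<bullet> x) - \<Omega> x \<noteq> -\<infinity>" by (cases "\<Omega> x") auto
  then show ?thesis using fenchel_young[of \<theta> x \<Omega>] by auto
qed

lemma fy_loss_nonneg:
  assumes "proper_fun \<Omega>"
  shows "0 \<le> fy_loss \<Omega> \<theta> \<mu>"
proof (cases "\<Omega> \<mu>")
  case (real m)
  then have "ereal (\<theta> \<bullet> \<mu> - m) \<le> fenchel_conj \<Omega> \<theta>" using fenchel_young[of \<theta> \<mu> \<Omega>] by simp
  then show ?thesis unfolding fy_loss_def real
    using fenchel_conj_proper_neq_minf[OF assms, of \<theta>]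
    by (cases "fenchel_conj \<Omega> \<theta>") auto
next
  case PInf then show ?thesis
    using fenchel_conj_proper_neq_minf[OF assms, of \<theta>] unfolding fy_loss_def
    by (cases "fenchel_conj \<Omega> \<theta>") auto
next
  case MInf then show ?thesis using assms unfolding proper_fun_def by blast
qed

text \<open>Strict separation of \<open>(\<mu>, \<alpha>)\<close> from the closed convex epigraph yields an affine minorant of
\<open>\<Omega>\<close> with value \<open>\<alpha>\<close> at \<open>\<mu>\<close>; the separating hyperplane is not vertical because it also separates
\<open>(\<mu>, \<alpha>)\<close> from \<open>(\<mu>, \<Omega> \<mu>)\<close>.\<close>

lemma fenchel_conj_le_affine_minorant:
  fixes \<Omega> :: "'a::euclidean_space \<Rightarrow> ereal"
  assumes proper: "proper_fun \<Omega>" and cv: "convex_ext \<Omega>" and lsc: "lsc_fun \<Omega>"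
    and m: "\<Omega> \<mu> = ereal m" and "\<alpha> < m"
  obtains \<theta> where "fenchel_conj \<Omega> \<theta> \<le> ereal (\<theta> \<bullet> \<mu> - \<alpha>)"
proof -
  let ?E = "{z::'a \<times> real. \<Omega> (fst z) \<le> ereal (snd z)}"
  have "(\<mu>, \<alpha>) \<notin> ?E" using m \<open>\<alpha> < m\<close> by simp
  then obtain a \<beta> r where sep1: "a \<bullet> \<mu> + \<beta> * \<alpha> < r" and sep2: "\<And>z. z \<in> ?E \<Longrightarrow> (a, \<beta>) \<bullet> z > r"
    using separating_hyperplane_closed_point[OF convex_epigraph_ext[OF cv] closed_epigraph_lsc[OF lsc]]
    by fastforce
  have "a \<bullet> \<mu> + \<beta> * m > r" using sep2[of "(\<mu>, m)"] m by simp
  with sep1 \<open>\<alpha> < m\<close> have "\<beta> > 0" by (smt (verit) mult_le_cancel_left)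
  define \<theta> where "\<theta> = (- 1 / \<beta>) *\<^sub>R a"
  have "ereal (\<theta> \<bullet> x) - \<Omega> x \<le> ereal (\<theta> \<bullet> \<mu> - \<alpha>)" for x
  proof (cases "\<Omega> x")
    case (real t)
    have "a \<bullet> x + \<beta> * t > r" using sep2[of "(x, t)"] real by simp
    with sep1 have "\<beta> * (\<alpha> * \<beta> + a \<bullet> \<mu>) \<le> \<beta> * (\<beta> * t + a \<bullet> x)"
      using \<open>\<beta> > 0\<close> by (intro mult_left_mono) (auto simp: algebra_simps)
    then have "\<theta> \<bullet> x - t \<le> \<theta> \<bullet> \<mu> - \<alpha>" using \<open>\<beta> > 0\<close> unfolding \<theta>_def by (simp add: field_simps)
    then show ?thesis using real by simp
  next
    case MInf then show ?thesis using proper unfolding proper_fun_def by blast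
  qed simp
  then have "fenchel_conj \<Omega> \<theta> \<le> ereal (\<theta> \<bullet> \<mu> - \<alpha>)"
    unfolding fenchel_conj_def by (intro SUP_least)
  then show ?thesis by (rule that)
qed

lemma INF_fy_loss_eq_0:
  fixes \<Omega> :: "'a::euclidean_space \<Rightarrow> ereal"
  assumes proper: "proper_fun \<Omega>" and "convex_ext \<Omega>" and "lsc_fun \<Omega>" and "\<mu> \<in> edom \<Omega>"
  shows "(INF \<theta>. fy_loss \<Omega> \<theta> \<mu>) = 0"
proof (rule antisym)
  obtain m where m: "\<Omega> \<mu> = ereal m" using edom_proper_finite[OF proper \<open>\<mu> \<in> edom \<Omega>\<close>] .
  show "(INF \<theta>. fy_loss \<Omega> \<theta> \<mu>) \<le> 0"
  proof (rule ereal_le_epsilon2)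
    fix e :: real assume "0 < e"
    then obtain \<theta> where "fenchel_conj \<Omega> \<theta> \<le> ereal (\<theta> \<bullet> \<mu> - (m - e))"
      using fenchel_conj_le_affine_minorant[OF assms(1-3) m, of "m - e"] by auto
    then have "fy_loss \<Omega> \<theta> \<mu> \<le> 0 + ereal e"
      unfolding fy_loss_def m
      using fenchel_conj_proper_neq_minf[OF proper, of \<theta>]
      by (cases "fenchel_conj \<Omega> \<theta>") auto
    then show "(INF \<theta>. fy_loss \<Omega> \<theta> \<mu>) \<le> 0 + ereal e"
      by (meson INF_lower UNIV_I order_trans)
  qed
  show "0 \<le> (INF \<theta>. fy_loss \<Omega> \<theta> \<mu>)"
    using fy_loss_nonneg[OF proper] by (rule INF_greatest)
qed

text \<open>The constant is \<open>\<Sum>\<^sub>y q y \<Omega>(\<phi> y) - \<Omega>(\<mu>)\<close>; the conjugate term \<open>\<Omega>\<^sup>*(\<theta>)\<close> and the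
linear term \<open>\<langle>\<theta>, \<phi> y\<rangle>\<close> of the loss both average to their value at \<open>\<mu>\<close>.\<close>

lemma surr_risk_fy_loss_expected_embedding:
  fixes \<phi> :: "'y \<Rightarrow> 'a::real_inner"
  assumes "finite Y" and proper: "proper_fun \<Omega>" and q: "q \<in> prob_simplex Y"
    and dom: "\<phi> ` Y \<subseteq> edom \<Omega>" and \<mu>: "expected_embedding Y \<phi> q \<in> edom \<Omega>"
  obtains C where "\<And>\<theta>. surr_risk Y (\<lambda>\<theta> y. fy_loss \<Omega> \<theta> (\<phi> y)) \<theta> q
                    = fy_loss \<Omega> \<theta> (expected_embedding Y \<phi> q) + ereal C"
proof -
  define \<mu> where "\<mu> = expected_embedding Y \<phi> q"
  obtain m where m: "\<Omega> \<mu> = ereal m" using edom_proper_finite[OF proper] \<mu> unfolding \<mu>_def by blast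
  define r where "r y = real_of_ereal (\<Omega> (\<phi> y))" for y
  have r: "\<Omega> (\<phi> y) = ereal (r y)" if "y \<in> Y" for y
    using edom_proper_finite[OF proper, of "\<phi> y"] dom that unfolding r_def by force
  define C where "C = (\<Sum>y\<in>Y. q y * r y) - m"
  have qnn: "\<And>y. y \<in> Y \<Longrightarrow> 0 \<le> q y" and sq: "sum q Y = 1" using prob_simplexD[OF q] by auto
  have "surr_risk Y (\<lambda>\<theta> y. fy_loss \<Omega> \<theta> (\<phi> y)) \<theta> q = fy_loss \<Omega> \<theta> \<mu> + ereal C" for \<theta>
  proof (cases "fenchel_conj \<Omega> \<theta>")
    case (real f)
    have "surr_risk Y (\<lambda>\<theta> y. fy_loss \<Omega> \<theta> (\<phi> y)) \<theta> q = ereal (\<Sum>y\<in>Y. q y * (f + r y - \<theta> \<bullet> \<phi> y))"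
      unfolding surr_risk_def fy_loss_def by (simp add: r real)
    also have "(\<Sum>y\<in>Y. q y * (f + r y - \<theta> \<bullet> \<phi> y)) = f * sum q Y + (\<Sum>y\<in>Y. q y * r y) - \<theta> \<bullet> \<mu>"
      unfolding \<mu>_def expected_embedding_def
      by (simp add: algebra_simps sum.distrib sum_subtractf sum_distrib_left inner_sum_right)
    also have "\<dots> = f + m - \<theta> \<bullet> \<mu> + C"
      unfolding C_def sq by simp
    finally show ?thesis unfolding fy_loss_def m real by simp
  next
    case PInf
    obtain y0 where y0: "y0 \<in> Y" "q y0 > 0"
      using sq qnn by (metis less_eq_real_def sum.neutral zero_neq_one)
    have "ereal (q y0) * fy_loss \<Omega> \<theta> (\<phi> y0) = \<infinity>"
      using y0 PInf r[OF y0(1)] unfolding fy_loss_def by simp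
    then have "surr_risk Y (\<lambda>\<theta> y. fy_loss \<Omega> \<theta> (\<phi> y)) \<theta> q = \<infinity>"
      unfolding surr_risk_def sum_Pinfty using \<open>finite Y\<close> y0(1) by blast
    then show ?thesis unfolding fy_loss_def PInf m by simp
  next
    case MInf then show ?thesis using fenchel_conj_proper_neq_minf[OF proper] by blast
  qed
  then show ?thesis unfolding \<mu>_def by (rule that)
qed

lemma excess_surr_risk_fy_loss_expected_embedding:
  fixes \<phi> :: "'y \<Rightarrow> 'a::euclidean_space"
  assumes "finite Y" and proper: "proper_fun \<Omega>" and "convex_ext \<Omega>" and "lsc_fun \<Omega>"
    and q: "q \<in> prob_simplex Y" and dom: "\<phi> ` Y \<subseteq> edom \<Omega>"
  shows "excess_surr_risk Y (\<lambda>\<theta> y. fy_loss \<Omega> \<theta> (\<phi> y)) \<theta> q = fy_loss \<Omega> \<theta> (expected_embedding Y \<phi> q)"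
proof -
  have \<mu>: "expected_embedding Y \<phi> q \<in> edom \<Omega>"
    using hull_minimal[where S = convex, OF dom convex_edom[OF \<open>convex_ext \<Omega>\<close>]] q
      convex_hull_eq_expected_embedding_image[OF \<open>finite Y\<close>] by blast
  obtain C where C: "\<And>\<theta>. surr_risk Y (\<lambda>\<theta> y. fy_loss \<Omega> \<theta> (\<phi> y)) \<theta> q
                      = fy_loss \<Omega> \<theta> (expected_embedding Y \<phi> q) + ereal C"
    using surr_risk_fy_loss_expected_embedding[OF \<open>finite Y\<close> proper q dom \<mu>] by blast
  have "(INF \<theta>'. fy_loss \<Omega> \<theta>' (expected_embedding Y \<phi> q) + ereal C) = ereal C"
    using INF_ereal_add_left[of UNIV "ereal C" "\<lambda>\<theta>'. fy_loss \<Omega> \<theta>' (expected_embedding Y \<phi> q)"]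
      fy_loss_nonneg[OF proper] INF_fy_loss_eq_0[OF assms(2-4) \<mu>] by simp
  then show ?thesis
    unfolding excess_surr_risk_def C by (cases "fy_loss \<Omega> \<theta> (expected_embedding Y \<phi> q)") auto
qed

theorem mainTheorem6:
  fixes Y :: "'y set" and Os :: "'o set"
    and \<phi> :: "'y \<Rightarrow> real^'p" and \<psi> :: "'o \<Rightarrow> real^'p"
    and L :: "'o \<Rightarrow> 'y \<Rightarrow> real"
    and V :: "real^'p^'p" and b :: "real^'p" and c :: "'y \<Rightarrow> real"
    and \<Omega> :: "real^'p \<Rightarrow> ereal"
    and yL :: "real^'p \<Rightarrow> 'o"
    and d :: "real^'p \<Rightarrow> 'o"
    and \<epsilon> :: real
  assumes finY: "finite Y" and finO: "finite Os"
    and L_form: "\<And>yh y. yh \<in> Os \<Longrightarrow> y \<in> Y \<Longrightarrow> L yh y = \<psi> yh \<bullet> (V *v \<phi> y + b) + c y"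
    and L_nonneg: "\<And>yh y. yh \<in> Os \<Longrightarrow> y \<in> Y \<Longrightarrow> 0 \<le> L yh y"
    and proper: "proper_fun \<Omega>" and convex: "convex_ext \<Omega>" and lsc: "lsc_fun \<Omega>"
    and dom: "\<phi> ` Y \<subseteq> edom \<Omega>"
    and yL_in: "\<And>u. yL u \<in> Os"
    and yL_min: "\<And>u y'. y' \<in> Os \<Longrightarrow> \<psi> (yL u) \<bullet> (V *v u + b) \<le> \<psi> y' \<bullet> (V *v u + b)"
    and d_in: "\<And>\<theta>. d \<theta> \<in> Os"
    and eps: "0 \<le> \<epsilon>"
  shows "(INF (\<theta>, q) \<in> {(\<theta>, q). q \<in> prob_simplex Y \<and> excess_ptw_risk Y Os L (d \<theta>) q \<ge> \<epsilon>}.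
            excess_surr_risk Y (\<lambda>\<theta> y. fy_loss \<Omega> \<theta> (\<phi> y)) \<theta> q)
       = (INF (\<theta>, \<mu>) \<in> {(\<theta>, \<mu>). \<mu> \<in> convex hull (\<phi> ` Y) \<and>
              (\<psi> (d \<theta>) - \<psi> (yL \<mu>)) \<bullet> (V *v \<mu> + b) \<ge> \<epsilon>}.
            fy_loss \<Omega> \<theta> \<mu>)"
proof -
  let ?A = "{(\<theta>, q). q \<in> prob_simplex Y \<and> excess_ptw_risk Y Os L (d \<theta>) q \<ge> \<epsilon>}"
  let ?B = "{(\<theta>, \<mu>). \<mu> \<in> convex hull (\<phi> ` Y) \<and> (\<psi> (d \<theta>) - \<psi> (yL \<mu>)) \<bullet> (V *v \<mu> + b) \<ge> \<epsilon>}"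
  let ?h = "\<lambda>(\<theta>, q). (\<theta>, expected_embedding Y \<phi> q)"
  have excess: "excess_ptw_risk Y Os L (d \<theta>) q
      = (\<psi> (d \<theta>) - \<psi> (yL (expected_embedding Y \<phi> q))) \<bullet> (V *v expected_embedding Y \<phi> q + b)"
    if "q \<in> prob_simplex Y" for \<theta> q
    using excess_ptw_risk_affine_loss[where L = L and \<psi> = \<psi> and V = V and b = b and c = c and \<phi> = \<phi>,
        OF finO that d_in L_form yL_in yL_min] .
  have "?B = ?h ` ?A"
    unfolding convex_hull_eq_expected_embedding_image[OF finY] by (auto simp: excess)
  then have "(INF (\<theta>, \<mu>) \<in> ?B. fy_loss \<Omega> \<theta> \<mu>) = (INF (\<theta>, q) \<in> ?A. fy_loss \<Omega> \<theta> (expected_embedding Y \<phi> q))"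
    by (simp add: image_comp case_prod_beta comp_def)
  also have "\<dots> = (INF (\<theta>, q) \<in> ?A. excess_surr_risk Y (\<lambda>\<theta> y. fy_loss \<Omega> \<theta> (\<phi> y)) \<theta> q)"
    using excess_surr_risk_fy_loss_expected_embedding[OF finY proper convex lsc _ dom]
    by (intro INF_cong) auto
  finally show ?thesis by simp
qed

end
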